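(* Let ${\mathbf{X}}={\mathbf{U}}_0{\mathbf{V}}_0^T$ with ${\mathbf{U}}_0\in\mathbb{R}_+^{m\times r}$, ${\mathbf{V}}_0\in\mathbb{R}_+^{n\times r}$ of full column rank $r\le\min\{m,n\}$. Let ${\mathbf{A}}_1\in\mathbb{R}^{r\times m}$, ${\mathbf{A}}_2\in\mathbb{R}^{n\times r}$ be such that ${\mathbf{A}}_1{\mathbf{X}}{\mathbf{A}}_2$ is invertible. Let $\lambda_1,\lambda_2>0$, $\sigma_1,\sigma_2\ge0$, and let $(\tilde{\mathbf{U}},\tilde{\mathbf{V}})$ be any minimizer over ${\mathbf{U}}\in\mathbb{R}_+^{m\times r},{\mathbf{V}}\in\mathbb{R}_+^{n\times r}$ of $$L({\mathbf{U}},{\mathbf{V}})+\sigma_1\|\mathbf{1}_m^T({\mathbf{X}}-{\mathbf{U}}{\mathbf{V}}^T)\|_2^2+\sigma_2\|({\mathbf{X}}-{\mathbf{U}}{\mathbf{V}}^T)\mathbf{1}_n\|_2^2,$$ where $L({\mathbf{U}},{\mathbf{V}})=\|{\mathbf{A}}_1({\mathbf{X}}-{\mathbf{U}}{\mathbf{V}}^T)\|_F^2+\|({\mathbf{X}}-{\mathbf{U}}{\mathbf{V}}^T){\mathbf{A}}_2\|_F^2+\lambda_1\|({\mathbf{I}}_m-\mathbf{P}_1){\mathbf{U}}{\mathbf{V}}^T\|_F^2+\lambda_2\|{\mathbf{U}}{\mathbf{V}}^T({\mathbf{I}}_n-\mathbf{P}_2)\|_F^2$, with $\mathbf{P}_1$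 the orthogonal projection onto the column space of ${\mathbf{X}}{\mathbf{A}}_2$ and $\mathbf{P}_2$ the orthogonal projection onto the row space of ${\mathbf{A}}_1{\mathbf{X}}$. Then ${\mathbf{X}}=\tilde{\mathbf{U}}\tilde{\mathbf{V}}^T$.
   Context: $\mathbb{R}_+^{a\times b}$ denotes the set of $a\times b$ entrywise nonnegative matrices; $\mathbf{1}_m\in\mathbb{R}^m$ is the all-ones vector. $\|\cdot\|_F$ is the Frobenius norm and $\|\cdot\|_2$ the Euclidean norm. *)

theory Defs
  imports "HOL-Analysis.Analysis"
begin

definition frob_sq :: "real^'n^'m \<Rightarrow> real" where
  "frob_sq A = (\<Sum>i\<in>UNIV. \<Sum>j\<in>UNIV. (A $ i $ j)^2)"

definition nonneg_mat :: "real^'n^'m \<Rightarrow> bool" where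
  "nonneg_mat A \<longleftrightarrow> (\<forall>i j. 0 \<le> A $ i $ j)"

definition ones :: "real^'n" where
  "ones = (\<chi> i. 1)"

definition orth_proj :: "(real^'n) set \<Rightarrow> real^'n^'n" where
  "orth_proj S = matrix (\<lambda>x. THE p. p \<in> S \<and> (\<forall>y\<in>S. (x - p) \<bullet> y = 0))"

end

theory Submission
  imports Defs
begin

text \<open>
  Since \<open>X\<close> has rank at most \<open>r\<close> and \<open>A\<^sub>1 X A\<^sub>2\<close> is an invertible \<open>r \<times> r\<close> matrix, \<open>X\<close> and
  \<open>X A\<^sub>2\<close> have the same column space, and \<open>X\<close> and \<open>A\<^sub>1 X\<close> the same row space. Hence both
  projection penalties vanish at \<open>(U\<^sub>0, V\<^sub>0)\<close>, the objective is \<open>0\<close> there, and every term of it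
  vanishes at a minimizer: \<open>A\<^sub>1 E = 0\<close> for \<open>E = X - \<tilde>U \<tilde>V\<^sup>T\<close>, and \<open>\<tilde>U \<tilde>V\<^sup>T\<close> has its columns in the
  column space of \<open>X A\<^sub>2\<close>. So the columns of \<open>E\<close> lie in the range of \<open>X A\<^sub>2\<close> and are
  annihilated by \<open>A\<^sub>1\<close>; invertibility of \<open>A\<^sub>1 X A\<^sub>2\<close> forces \<open>E = 0\<close>.
\<close>

lemma orth_proj_exists_unique:
  fixes S :: "(real^'n) set"
  assumes S: "subspace S"
  shows "\<exists>!p. p \<in> S \<and> (\<forall>y\<in>S. (x - p) \<bullet> y = 0)"
proof -
  obtain p z where p: "p \<in> span S" and z: "\<And>w. w \<in> span S \<Longrightarrow> orthogonal z w"
    and x: "x = p + z"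
    using orthogonal_subspace_decomp_exists[of S x] by blast
  have span_S: "span S = S" using S by (simp add: span_eq_iff)
  have p_proj: "p \<in> S \<and> (\<forall>y\<in>S. (x - p) \<bullet> y = 0)"
    using p z x unfolding span_S orthogonal_def by auto
  show ?thesis
  proof (rule ex1I[of _ p])
    fix q assume q: "q \<in> S \<and> (\<forall>y\<in>S. (x - q) \<bullet> y = 0)"
    have "q - p \<in> S" using q p_proj S by (simp add: subspace_diff)
    then have "(q - p) \<bullet> (q - p) = (x - p) \<bullet> (q - p) - (x - q) \<bullet> (q - p)"
      by (simp add: inner_diff_left)
    also have "\<dots> = 0" using q p_proj \<open>q - p \<in> S\<close> by simp
    finally show "q = p" by simp
  qed (fact p_proj)
qed

lemma linear_orth_proj_fun:
  fixes S :: "(real^'n) set"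
  assumes S: "subspace S"
  shows "linear (\<lambda>x. THE p. p \<in> S \<and> (\<forall>y\<in>S. (x - p) \<bullet> y = 0))" (is "linear ?P")
proof -
  have P: "?P x \<in> S \<and> (\<forall>y\<in>S. (x - ?P x) \<bullet> y = 0)" for x
    by (rule theI'[OF orth_proj_exists_unique[OF S]])
  have P_eq: "p \<in> S \<Longrightarrow> \<forall>y\<in>S. (x - p) \<bullet> y = 0 \<Longrightarrow> ?P x = p" for x p
    by (rule the1_equality[OF orth_proj_exists_unique[OF S]]) simp
  show ?thesis
  proof (rule linearI)
    fix x y
    show "?P (x + y) = ?P x + ?P y"
    proof (rule P_eq)
      show "?P x + ?P y \<in> S" using P S by (simp add: subspace_add)
      show "\<forall>w\<in>S. (x + y - (?P x + ?P y)) \<bullet> w = 0"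
      proof
        fix w assume "w \<in> S"
        have "x + y - (?P x + ?P y) = (x - ?P x) + (y - ?P y)" by simp
        then show "(x + y - (?P x + ?P y)) \<bullet> w = 0"
          using P \<open>w \<in> S\<close> by (simp only: inner_add_left)
      qed
    qed
  next
    fix c :: real and x
    show "?P (c *\<^sub>R x) = c *\<^sub>R ?P x"
    proof (rule P_eq)
      show "c *\<^sub>R ?P x \<in> S" using P S by (simp add: subspace_scale)
      show "\<forall>w\<in>S. (c *\<^sub>R x - c *\<^sub>R ?P x) \<bullet> w = 0"
        using P by (simp flip: scaleR_right_diff_distrib)
    qed
  qed
qed

lemma orth_proj_mult_vec:
  fixes S :: "(real^'n) set"
  assumes "subspace S"
  shows "orth_proj S *v x = (THE p. p \<in> S \<and> (\<forall>y\<in>S. (x - p) \<bullet> y = 0))"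
  unfolding orth_proj_def by (simp add: matrix_works linear_orth_proj_fun[OF assms])

lemma orth_proj_in_and_orthogonal:
  fixes S :: "(real^'n) set"
  assumes "subspace S"
  shows "orth_proj S *v x \<in> S"
    and "y \<in> S \<Longrightarrow> (x - orth_proj S *v x) \<bullet> y = 0"
  using theI'[OF orth_proj_exists_unique[OF assms, of x]]
  by (simp_all add: orth_proj_mult_vec[OF assms])

lemma orth_proj_fixes:
  fixes S :: "(real^'n) set"
  assumes "subspace S" and "y \<in> S"
  shows "orth_proj S *v y = y"
  using the1_equality[OF orth_proj_exists_unique[OF assms(1)], of y] assms(2)
  by (simp add: orth_proj_mult_vec[OF assms(1)])

lemma transpose_orth_proj:
  fixes S :: "(real^'n) set"
  assumes S: "subspace S"
  shows "transpose (orth_proj S) = orth_proj S"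
proof -
  let ?P = "orth_proj S"
  have "(?P *v x) \<bullet> y = x \<bullet> (?P *v y)" for x y
  proof -
    have "(?P *v x) \<bullet> y = (?P *v x) \<bullet> (?P *v y) + (y - ?P *v y) \<bullet> (?P *v x)"
      by (simp add: inner_diff_left inner_diff_right inner_commute)
    also have "\<dots> = (?P *v x) \<bullet> (?P *v y) + (x - ?P *v x) \<bullet> (?P *v y)"
      using orth_proj_in_and_orthogonal[OF S] by simp
    also have "\<dots> = x \<bullet> (?P *v y)" by (simp add: inner_diff_left)
    finally show ?thesis .
  qed
  then have "adjoint ((*v) ?P) = (*v) ?P"
    by (intro adjoint_unique) blast
  then show ?thesis
    by (simp add: adjoint_matrix matrix_eq fun_eq_iff)
qed

lemma orth_proj_complement_mult_eq_0_iff: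
  fixes S :: "(real^'n) set" and M :: "real^'k^'n"
  assumes S: "subspace S"
  shows "(mat 1 - orth_proj S) ** M = 0 \<longleftrightarrow> (\<forall>v. M *v v \<in> S)"
proof -
  have "((mat 1 - orth_proj S) ** M) *v v = M *v v - orth_proj S *v (M *v v)" for v
    by (simp add: matrix_vector_mul_assoc[symmetric] matrix_vector_mult_diff_rdistrib)
  then show ?thesis
    using orth_proj_fixes[OF S] orth_proj_in_and_orthogonal(1)[OF S]
    by (simp add: matrix_eq) (metis eq_iff_diff_eq_0)
qed

lemma mult_orth_proj_complement_eq_0:
  fixes S :: "(real^'n) set" and M :: "real^'n^'k"
  assumes S: "subspace S" and rows_in: "\<And>v. transpose M *v v \<in> S"
  shows "M ** (mat 1 - orth_proj S) = 0"
proof -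
  have "transpose (mat 1 - orth_proj S) = mat 1 - orth_proj S"
    using transpose_orth_proj[OF S] by (simp add: transpose_def vec_eq_iff mat_def)
  then have "transpose (M ** (mat 1 - orth_proj S)) = (mat 1 - orth_proj S) ** transpose M"
    by (simp add: matrix_transpose_mul)
  also have "\<dots> = 0"
    using orth_proj_complement_mult_eq_0_iff[OF S] rows_in by blast
  also have "\<dots> = transpose 0" by (simp add: transpose_def vec_eq_iff)
  finally show ?thesis by simp
qed

lemma span_columns_eq_range:
  fixes A :: "real^'n^'m"
  shows "span (columns A) = range ((*v) A)"
proof
  show "range ((*v) A) \<subseteq> span (columns A)"
    using matrix_vector_mult_in_columnspace by blast
  have "subspace (range ((*v) A))"
    by (rule linear_subspace_image[OF matrix_vector_mul_linear subspace_UNIV])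
  moreover have "columns A \<subseteq> range ((*v) A)"
    by (auto simp: columns_image_basis)
  ultimately show "span (columns A) \<subseteq> range ((*v) A)"
    by (simp add: span_minimal)
qed

text \<open>The \<open>r \<times> r\<close> matrix \<open>C X B\<close> has full rank \<open>r \<ge> rank X\<close>, so \<open>rank (X B) = rank X\<close>.\<close>

lemma span_columns_mult_eq_range_of_invertible:
  fixes X :: "real^'n^'m" and B :: "real^'r^'n" and C :: "real^'m^'r"
  assumes rank_X: "rank X \<le> CARD('r)" and inv: "invertible (C ** X ** B)"
  shows "span (columns (X ** B)) = range ((*v) X)"
proof -
  let ?R = "range ((*v) (X ** B))" and ?T = "range ((*v) X)"
  have sub: "?R \<subseteq> ?T"
    by (auto simp: matrix_vector_mul_assoc[symmetric])
  have "rank (C ** X ** B) = CARD('r)"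
    using full_rank_injective inj_matrix_vector_mult[OF inv] by blast
  moreover have "rank (C ** X ** B) \<le> rank (X ** B)"
    by (metis matrix_mul_assoc rank_mul_le_right)
  ultimately have "dim ?T \<le> dim ?R"
    using rank_X by (simp add: rank_dim_range)
  then have "span ?R = span ?T"
    using dim_eq_span[OF sub] by simp
  then show ?thesis
    by (metis span_columns_eq_range span_span)
qed

lemma eq_0_of_annihilated_in_range:
  fixes C :: "real^'m^'r" and X :: "real^'n^'m" and B :: "real^'r^'n" and E :: "real^'k^'m"
  assumes inv: "invertible (C ** X ** B)" and CE: "C ** E = 0"
    and range_E: "\<And>v. E *v v \<in> range ((*v) (X ** B))"
  shows "E = 0"
proof -
  have "E *v v = 0" for v
  proof -
    obtain c where c: "E *v v = (X ** B) *v c"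
      using range_E by blast
    have "(C ** X ** B) *v c = C *v (E *v v)"
      by (simp add: c matrix_vector_mul_assoc matrix_mul_assoc)
    also have "\<dots> = (C ** X ** B) *v 0"
      using CE by (simp add: matrix_vector_mul_assoc)
    finally have "c = 0"
      using inj_matrix_vector_mult[OF inv] by (meson injD)
    then show ?thesis using c by simp
  qed
  then show ?thesis by (simp add: matrix_eq)
qed

lemma frob_sq_nonneg: "frob_sq (A :: real^'n^'m) \<ge> 0"
  unfolding frob_sq_def by (intro sum_nonneg) simp

lemma frob_sq_eq_0_iff: "frob_sq (A :: real^'n^'m) = 0 \<longleftrightarrow> A = 0"
  unfolding frob_sq_def
  by (simp add: sum_nonneg_eq_0_iff sum_nonneg vec_eq_iff)

lemma orth_proj_complements_annihilate_low_rank: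
  fixes X :: "real^'n^'m" and A1 :: "real^'m^'r" and A2 :: "real^'r^'n"
  assumes rank_X: "rank X \<le> CARD('r)" and inv: "invertible (A1 ** X ** A2)"
  shows "(mat 1 - orth_proj (span (columns (X ** A2)))) ** X = 0"
    and "X ** (mat 1 - orth_proj (span (rows (A1 ** X)))) = 0"
proof -
  show "(mat 1 - orth_proj (span (columns (X ** A2)))) ** X = 0"
    using orth_proj_complement_mult_eq_0_iff[OF subspace_span, of "columns (X ** A2)" X]
      span_columns_mult_eq_range_of_invertible[OF rank_X inv] by auto
  have inv_T: "invertible (transpose A2 ** transpose X ** transpose A1)"
    using transpose_invertible[OF inv] by (simp add: matrix_transpose_mul matrix_mul_assoc)
  have "rows (A1 ** X) = columns (transpose X ** transpose A1)"
    by (simp flip: matrix_transpose_mul)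
  then have "transpose X *v v \<in> span (rows (A1 ** X))" for v
    using span_columns_mult_eq_range_of_invertible[OF _ inv_T] rank_X by (auto simp: rank_transpose)
  then show "X ** (mat 1 - orth_proj (span (rows (A1 ** X)))) = 0"
    by (intro mult_orth_proj_complement_eq_0 subspace_span)
qed

lemma eq_of_annihilated_difference:
  fixes X M :: "real^'n^'m" and A1 :: "real^'m^'r" and A2 :: "real^'r^'n"
  assumes rank_X: "rank X \<le> CARD('r)" and inv: "invertible (A1 ** X ** A2)"
    and A1_diff: "A1 ** (X - M) = 0"
    and M_cols: "(mat 1 - orth_proj (span (columns (X ** A2)))) ** M = 0"
  shows "X = M"
proof -
  let ?S = "span (columns (X ** A2))"
  have "(X - M) *v v \<in> range ((*v) (X ** A2))" for v
  proof -
    have "X *v v - M *v v \<in> ?S"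
      using M_cols orth_proj_complement_mult_eq_0_iff[OF subspace_span, of "columns (X ** A2)" M]
        subspace_diff[OF subspace_span, of _ "columns (X ** A2)"]
        span_columns_mult_eq_range_of_invertible[OF rank_X inv] by auto
    then show ?thesis
      by (simp add: span_columns_eq_range matrix_vector_mult_diff_rdistrib)
  qed
  then have "X - M = 0"
    by (intro eq_0_of_annihilated_in_range[OF inv A1_diff])
  then show ?thesis by simp
qed

theorem mainTheorem5:
  fixes U0 :: "real^'r^'m" and V0 :: "real^'r^'n"
    and A1 :: "real^'m^'r" and A2 :: "real^'r^'n"
    and lam1 lam2 sig1 sig2 :: real
    and X :: "real^'n^'m"
    and J :: "real^'r^'m \<Rightarrow> real^'r^'n \<Rightarrow> real"
    and Ut :: "real^'r^'m" and Vt :: "real^'r^'n"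
  assumes X_def: "X = U0 ** transpose V0"
    and U0_nonneg: "nonneg_mat U0" and V0_nonneg: "nonneg_mat V0"
    and U0_rank: "rank U0 = CARD('r)" and V0_rank: "rank V0 = CARD('r)"
    and inv: "invertible (A1 ** X ** A2)"
    and lam: "lam1 > 0" "lam2 > 0"
    and sig: "sig1 \<ge> 0" "sig2 \<ge> 0"
    and J_def: "\<And>U V. J U V =
        frob_sq (A1 ** (X - U ** transpose V))
      + frob_sq ((X - U ** transpose V) ** A2)
      + lam1 * frob_sq ((mat 1 - orth_proj (span (columns (X ** A2)))) ** (U ** transpose V))
      + lam2 * frob_sq ((U ** transpose V) ** (mat 1 - orth_proj (span (rows (A1 ** X)))))
      + sig1 * (norm (ones v* (X - U ** transpose V)))^2
      + sig2 * (norm ((X - U ** transpose V) *v ones))^2"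
    and Ut_nonneg: "nonneg_mat Ut" and Vt_nonneg: "nonneg_mat Vt"
    and minimizer: "\<And>U V. nonneg_mat U \<Longrightarrow> nonneg_mat V \<Longrightarrow> J Ut Vt \<le> J U V"
  shows "X = Ut ** transpose Vt"
proof -
  let ?P1 = "orth_proj (span (columns (X ** A2)))" and ?P2 = "orth_proj (span (rows (A1 ** X)))"
  let ?M = "Ut ** transpose Vt"
  have rank_X: "rank X \<le> CARD('r)"
    using rank_mul_le_left[of U0 "transpose V0"] U0_rank X_def by simp
  have "J U0 V0 = 0"
    using orth_proj_complements_annihilate_low_rank[OF rank_X inv]
    unfolding J_def X_def[symmetric] by (simp add: frob_sq_def)
  then have "J Ut Vt \<le> 0"
    using minimizer[OF U0_nonneg V0_nonneg] by simp
  moreover have "0 \<le> frob_sq ((X - ?M) ** A2) + lam2 * frob_sq (?M ** (mat 1 - ?P2))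
      + sig1 * (norm (ones v* (X - ?M)))^2 + sig2 * (norm ((X - ?M) *v ones))^2"
    using lam sig by (intro add_nonneg_nonneg mult_nonneg_nonneg frob_sq_nonneg) auto
  moreover have "0 \<le> lam1 * frob_sq ((mat 1 - ?P1) ** ?M)"
    using lam by (simp add: frob_sq_nonneg)
  ultimately have "frob_sq (A1 ** (X - ?M)) = 0" and "lam1 * frob_sq ((mat 1 - ?P1) ** ?M) = 0"
    using frob_sq_nonneg[of "A1 ** (X - ?M)"] unfolding J_def by linarith+
  then show ?thesis
    using eq_of_annihilated_difference[OF rank_X inv] lam by (simp add: frob_sq_eq_0_iff)
qed

end
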